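(* For every $m\ge1$ and every $0\le s\le m$, $$\tilde G_s(m,\{\lambda_l\}|\{\xi_k\})=\frac{1}{\sin^m\zeta}\,Z_m(\{\lambda_l\}|\{\xi_k\}).$$ In particular $\tilde G_s$ does not depend on $s$, and equivalently $$G_s(m,\{\lambda\}|\{\xi\})=\frac{1}{s!(m-s)!\,\sin^m\zeta}\,\Theta^s_m(\lambda_1,\dots,\lambda_m)\,Z_m(\{\lambda\}|\{\xi\}).$$
   Context: Fix $\zeta\in(0,\pi)$. For integers $m\ge1$, $0\le s\le m$, set $\epsilon_j=-\tfrac12$ for $j\le s$ and $\epsilon_j=+\tfrac12$ for $j>s$ ($\epsilon_j$ attached to $\lambda_j$). Define $$G_s(m,\{\lambda_j\}|\{\xi_k\})=\frac{1}{s!(m-s)!}\sum_{\sigma\in S_m}(-1)^{[\sigma]}\prod_{1\le k<j\le m}\frac{\sinh(\lambda_{\sigma(j)}-\xi_k+i\epsilon_{\sigma(j)}\zeta)\,\sinh(\lambda_{\sigma(k)}-\xi_j-i\epsilon_{\sigma(k)}\zeta)}{\sinh(\lambda_{\sigma(j)}-\lambda_{\sigma(k)}+i(\epsilon_{\sigma(j)}+\epsilon_{\sigma(k)})\zeta)}$$ ($(-1)^{[\sigma]}$ the sign of $\sigma$), and $\tilde G_s$ by $$G_s=\frac{1}{s!(m-s)!}\prod_{1\le k<j\le m}\frac{\sinh(\lambda_j-\lambda_k)}{\sinh(\lambda_j-\lambda_k+i(\epsilon_j+\epsilon_k)\zeta)\,\sinh(\lambda_j-\lambda_k-i(\epsilon_j+\epsilon_k)\zeta)}\;\tilde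 G_s.$$ The (inhomogeneous six-vertex domain-wall) partition function is $$Z_m(\{\lambda\}|\{\xi\})=\frac{\prod_{j,k=1}^m\sinh(\lambda_j-\xi_k+i\frac\zeta2)\sinh(\lambda_j-\xi_k-i\frac\zeta2)}{\prod_{1\le k<j\le m}\sinh(\lambda_j-\lambda_k)\sinh(\xi_k-\xi_j)}\det_m\mathcal M,\qquad \mathcal M_{jk}=\frac{\sin\zeta}{\sinh(\lambda_j-\xi_k+i\frac\zeta2)\sinh(\lambda_j-\xi_k-i\frac\zeta2)},$$ and $$\Theta^s_m(\lambda_1,\dots,\lambda_m)=\prod_{k=1}^s\prod_{j=s+1}^m\frac1{\sinh(\lambda_j-\lambda_k)}\prod_{m\ge j>k>s}\frac{\sinh(\lambda_j-\lambda_k)}{\sinh(\lambda_j-\lambda_k+i\zeta)\sinh(\lambda_j-\lambda_k-i\zeta)}\prod_{s\ge j>k\ge1}\frac{\sinh(\lambda_j-\lambda_k)}{\sinh(\lambda_j-\lambda_k+i\zeta)\sinh(\lambda_j-\lambda_k-i\zeta)}.$$ All identities are between meromorphic functions. *)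

theory Defs
  imports Complex_Main "HOL-Combinatorics.Permutations" "Jordan_Normal_Form.Determinant"
begin

(* Indices run over {1..m}; spectral parameters lambda, inhomogeneities xi :: nat => complex. *)

definition eps :: "nat \<Rightarrow> nat \<Rightarrow> complex" where
  "eps s j = (if j \<le> s then - 1/2 else 1/2)"

definition G :: "real \<Rightarrow> nat \<Rightarrow> nat \<Rightarrow> (nat \<Rightarrow> complex) \<Rightarrow> (nat \<Rightarrow> complex) \<Rightarrow> complex" where
  "G \<zeta> s m lam xi = 1 / (of_nat (fact s * fact (m - s))) *
     (\<Sum>\<sigma> | \<sigma> permutes {1..m}. of_int (sign \<sigma>) *
        (\<Prod>(k, j) \<in> {(k, j). 1 \<le> k \<and> k < j \<and> j \<le> m}.
           sinh (lam (\<sigma> j) - xi k + \<i> * eps s (\<sigma> j) * of_real \<zeta>) *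
           sinh (lam (\<sigma> k) - xi j - \<i> * eps s (\<sigma> k) * of_real \<zeta>) /
           sinh (lam (\<sigma> j) - lam (\<sigma> k) + \<i> * (eps s (\<sigma> j) + eps s (\<sigma> k)) * of_real \<zeta>)))"

(* G_s = 1/(s!(m-s)!) * P * Gtilde_s, P the product below; hence Gtilde_s = s!(m-s)! * G_s / P *)
definition Pfac :: "real \<Rightarrow> nat \<Rightarrow> nat \<Rightarrow> (nat \<Rightarrow> complex) \<Rightarrow> complex" where
  "Pfac \<zeta> s m lam = (\<Prod>(k, j) \<in> {(k, j). 1 \<le> k \<and> k < j \<and> j \<le> m}.
      sinh (lam j - lam k) /
      (sinh (lam j - lam k + \<i> * (eps s j + eps s k) * of_real \<zeta>) *
       sinh (lam j - lam k - \<i> * (eps s j + eps s k) * of_real \<zeta>)))"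

definition Gtilde :: "real \<Rightarrow> nat \<Rightarrow> nat \<Rightarrow> (nat \<Rightarrow> complex) \<Rightarrow> (nat \<Rightarrow> complex) \<Rightarrow> complex" where
  "Gtilde \<zeta> s m lam xi = of_nat (fact s * fact (m - s)) * G \<zeta> s m lam xi / Pfac \<zeta> s m lam"

definition Mmat :: "real \<Rightarrow> nat \<Rightarrow> (nat \<Rightarrow> complex) \<Rightarrow> (nat \<Rightarrow> complex) \<Rightarrow> complex mat" where
  "Mmat \<zeta> m lam xi = mat m m (\<lambda>(a, b).
     of_real (sin \<zeta>) / (sinh (lam (Suc a) - xi (Suc b) + \<i> * of_real \<zeta> / 2) *
                          sinh (lam (Suc a) - xi (Suc b) - \<i> * of_real \<zeta> / 2)))"

definition Z :: "real \<Rightarrow> nat \<Rightarrow> (nat \<Rightarrow> complex) \<Rightarrow> (nat \<Rightarrow> complex) \<Rightarrow> complex" where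
  "Z \<zeta> m lam xi =
     (\<Prod>j\<in>{1..m}. \<Prod>k\<in>{1..m}. sinh (lam j - xi k + \<i> * of_real \<zeta> / 2) *
                                  sinh (lam j - xi k - \<i> * of_real \<zeta> / 2)) /
     (\<Prod>(k, j) \<in> {(k, j). 1 \<le> k \<and> k < j \<and> j \<le> m}. sinh (lam j - lam k) * sinh (xi k - xi j))
     * det (Mmat \<zeta> m lam xi)"

definition Theta :: "real \<Rightarrow> nat \<Rightarrow> nat \<Rightarrow> (nat \<Rightarrow> complex) \<Rightarrow> complex" where
  "Theta \<zeta> s m lam =
     (\<Prod>k\<in>{1..s}. \<Prod>j\<in>{s+1..m}. 1 / sinh (lam j - lam k)) *
     (\<Prod>(k, j) \<in> {(k, j). s < k \<and> k < j \<and> j \<le> m}.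
        sinh (lam j - lam k) / (sinh (lam j - lam k + \<i> * of_real \<zeta>) * sinh (lam j - lam k - \<i> * of_real \<zeta>))) *
     (\<Prod>(k, j) \<in> {(k, j). 1 \<le> k \<and> k < j \<and> j \<le> s}.
        sinh (lam j - lam k) / (sinh (lam j - lam k + \<i> * of_real \<zeta>) * sinh (lam j - lam k - \<i> * of_real \<zeta>)))"

end

(*
  Write U_a = lam_a + i eps_a zeta and W_a = lam_a - i eps_a zeta. Then s!(m-s)! G_s is a signed
  sum over permutations of products of sinh differences of U, W and xi, and the prefactor defining
  Gtilde_s is what turns the remaining pair products into the cross product of sinh (U_a - W_b),
  a <> b, times the Vandermonde product of sinh (xi_j - xi_k). Expanding the determinant, the
  numerator of Z_m is a signed sum of the same kind; it does not depend on s because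
  {U_a, W_a} = {lam_a + i zeta/2, lam_a - i zeta/2}.

  Since sinh (u - v) = (e^(2u)/2 - e^(2v)/2) e^(-u) e^(-v), the factors e^(-u) cancel and the claim
  reduces to a rational identity in x = e^(2u)/2, proved by induction on m: as a function of the
  last coordinate of xi, the difference of the two sides is a polynomial of degree at most 2(m-1);
  it vanishes at xi_k for k < m, where both sides vanish, and at Y_a for every a, where after
  moving a to the last place both sides factor through the identity for m - 1.
*)
theory Submission
  imports Defs "HOL-Computational_Algebra.Polynomial" "HOL-Library.Disjoint_Sets"
begin

section \<open>Polynomial functions of bounded degree\<close>

definition polyfun_le :: "nat \<Rightarrow> ('a::comm_ring_1 \<Rightarrow> 'a) \<Rightarrow> bool" where
  "polyfun_le d f \<longleftrightarrow> (\<exists>p. degree p \<le> d \<and> f = poly p)"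

lemma polyfun_le_const: "polyfun_le d (\<lambda>z. c)"
  unfolding polyfun_le_def by (intro exI[of _ "[:c:]"]) auto

lemma polyfun_le_const_minus_ident: "polyfun_le 1 (\<lambda>z. c - z)"
  unfolding polyfun_le_def by (intro exI[of _ "[:c, -1:]"]) (auto simp: fun_eq_iff)

lemma polyfun_le_ident_minus_const: "polyfun_le 1 (\<lambda>z. z - c)"
  unfolding polyfun_le_def by (intro exI[of _ "[:-c, 1:]"]) (auto simp: fun_eq_iff)

lemma polyfun_le_add:
  assumes "polyfun_le d f" "polyfun_le d g"
  shows "polyfun_le d (\<lambda>z. f z + g z)"
proof -
  obtain p q where "degree p \<le> d" "f = poly p" "degree q \<le> d" "g = poly q"
    using assms unfolding polyfun_le_def by blast
  then show ?thesis
    unfolding polyfun_le_def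
    by (intro exI[of _ "p + q"]) (auto intro: order.trans[OF degree_add_le_max] simp: fun_eq_iff)
qed

lemma polyfun_le_diff:
  assumes "polyfun_le d f" "polyfun_le d g"
  shows "polyfun_le d (\<lambda>z. f z - g z)"
proof -
  obtain p q where "degree p \<le> d" "f = poly p" "degree q \<le> d" "g = poly q"
    using assms unfolding polyfun_le_def by blast
  then show ?thesis
    unfolding polyfun_le_def
    by (intro exI[of _ "p - q"]) (auto intro: order.trans[OF degree_diff_le_max] simp: fun_eq_iff)
qed

lemma polyfun_le_mult:
  assumes "polyfun_le d f" "polyfun_le e g"
  shows "polyfun_le (d + e) (\<lambda>z. f z * g z)"
proof -
  obtain p q where "degree p \<le> d" "f = poly p" "degree q \<le> e" "g = poly q"
    using assms unfolding polyfun_le_def by blast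
  then show ?thesis
    unfolding polyfun_le_def
    by (intro exI[of _ "p * q"]) (auto intro: order.trans[OF degree_mult_le] simp: fun_eq_iff)
qed

lemma polyfun_le_divide_const:
  fixes f :: "'a::field \<Rightarrow> 'a"
  shows "polyfun_le d f \<Longrightarrow> polyfun_le d (\<lambda>z. f z / c)"
  using polyfun_le_mult[of d f 0 "\<lambda>_. inverse c"] by (simp add: polyfun_le_const divide_inverse)

lemma polyfun_le_sum:
  "finite S \<Longrightarrow> (\<And>i. i \<in> S \<Longrightarrow> polyfun_le d (f i)) \<Longrightarrow> polyfun_le d (\<lambda>z. \<Sum>i\<in>S. f i z)"
  by (induction S rule: finite_induct) (auto intro: polyfun_le_const polyfun_le_add)

lemma polyfun_le_prod:
  "finite S \<Longrightarrow> (\<And>i. i \<in> S \<Longrightarrow> polyfun_le (d i) (f i)) \<Longrightarrow>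
    polyfun_le (\<Sum>i\<in>S. d i) (\<lambda>z. \<Prod>i\<in>S. f i z)"
  by (induction S rule: finite_induct) (auto intro: polyfun_le_const polyfun_le_mult)

lemma polyfun_le_const_minus_fun_upd: "polyfun_le (if j = i then 1 else 0) (\<lambda>z. c - (f(i := z)) j)"
  using polyfun_le_const_minus_ident[of c] by (cases "j = i") (simp_all add: polyfun_le_const)

lemma polyfun_le_eq_0:
  fixes f :: "'a::idom \<Rightarrow> 'a"
  assumes "polyfun_le d f" "d < card R" "\<And>r. r \<in> R \<Longrightarrow> f r = 0"
  shows "f z = 0"
proof -
  obtain p where p: "degree p \<le> d" "f = poly p"
    using assms(1) unfolding polyfun_le_def by blast
  have "p = 0"
    by (rule poly_eqI_degree[of R]) (use assms p in auto)
  with p show ?thesis by simp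
qed

definition index_pairs :: "nat \<Rightarrow> (nat \<times> nat) set" where
  "index_pairs m = {(k, j). 1 \<le> k \<and> k < j \<and> j \<le> m}"

lemma finite_index_pairs [simp]: "finite (index_pairs m)"
  by (rule finite_subset[of _ "{1..m} \<times> {1..m}"]) (auto simp: index_pairs_def)

lemma index_pairs_0 [simp]: "index_pairs 0 = {}"
  by (auto simp: index_pairs_def)

lemma index_pairs_Suc: "index_pairs (Suc n) = index_pairs n \<union> (\<lambda>k. (k, Suc n)) ` {1..n}"
  by (auto simp: index_pairs_def)

lemma index_pairs_disjoint_last_column: "index_pairs n \<inter> (\<lambda>k. (k, Suc n)) ` {1..n} = {}"
  by (auto simp: index_pairs_def)

lemma prod_index_pairs_Suc:
  "(\<Prod>x\<in>index_pairs (Suc n). f x) = (\<Prod>x\<in>index_pairs n. f x) * (\<Prod>k\<in>{1..n}. f (k, Suc n))"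
  unfolding index_pairs_Suc
  by (subst prod.union_disjoint) (use index_pairs_disjoint_last_column in \<open>auto simp: prod.reindex inj_on_def\<close>)

lemma sum_index_pairs_last_column:
  "(\<Sum>(k, j)\<in>index_pairs (Suc n). if j = Suc n then 1 else 0) = (n::nat)"
proof -
  have "(\<Sum>(k, j)\<in>index_pairs n. if j = Suc n then 1 else 0) = (0::nat)"
    by (intro sum.neutral) (auto simp: index_pairs_def)
  then show ?thesis
    unfolding index_pairs_Suc
    by (subst sum.union_disjoint) (use index_pairs_disjoint_last_column in \<open>auto simp: sum.reindex inj_on_def\<close>)
qed

lemma prod_offdiag_Suc:
  "(\<Prod>a\<in>{1..Suc n}. \<Prod>b\<in>{1..Suc n}-{a}. h a b) =
   (\<Prod>a\<in>{1..n}. \<Prod>b\<in>{1..n}-{a}. h a b) * (\<Prod>c\<in>{1..n}. h (Suc n) c * h c (Suc n))"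
proof -
  have last_row: "(\<Prod>b\<in>{1..Suc n}-{Suc n}. h (Suc n) b) = (\<Prod>b\<in>{1..n}. h (Suc n) b)"
    by (intro prod.cong) auto
  have row: "(\<Prod>b\<in>{1..Suc n}-{a}. h a b) = h a (Suc n) * (\<Prod>b\<in>{1..n}-{a}. h a b)"
    if "a \<in> {1..n}" for a
  proof -
    have "{1..Suc n}-{a} = insert (Suc n) ({1..n}-{a})" using that by auto
    then show ?thesis by simp
  qed
  have "(\<Prod>a\<in>{1..Suc n}. \<Prod>b\<in>{1..Suc n}-{a}. h a b) =
      (\<Prod>b\<in>{1..n}. h (Suc n) b) * (\<Prod>a\<in>{1..n}. h a (Suc n) * (\<Prod>b\<in>{1..n}-{a}. h a b))"
  proof -
    have "(\<Prod>a\<in>{1..Suc n}. \<Prod>b\<in>{1..Suc n}-{a}. h a b) =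
        (\<Prod>b\<in>{1..Suc n}-{Suc n}. h (Suc n) b) * (\<Prod>a\<in>{1..n}. \<Prod>b\<in>{1..Suc n}-{a}. h a b)"
      by (rule prod.nat_ivl_Suc') simp
    then show ?thesis
      by (simp only: last_row row cong: prod.cong)
  qed
  then show ?thesis
    by (simp add: prod.distrib mult_ac)
qed

lemma prod_offdiag_eq_prod_index_pairs:
  "(\<Prod>a\<in>{1..m}. \<Prod>b\<in>{1..m}-{a}. h a b) = (\<Prod>(k, j)\<in>index_pairs m. h j k * h k j)"
proof (induction m)
  case (Suc n)
  then show ?case
    unfolding prod_offdiag_Suc prod_index_pairs_Suc by simp
qed simp

lemma prod_offdiag_const_row:
  assumes "finite S"
  shows "(\<Prod>a\<in>S. \<Prod>b\<in>S-{a}. g b) = (\<Prod>b\<in>S. g b ^ (card S - 1))"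
proof -
  have "(\<Prod>a\<in>S. \<Prod>b\<in>S-{a}. g b) = (\<Prod>a\<in>S. \<Prod>b\<in>{b. b \<in> S \<and> a \<noteq> b}. g b)"
    by (intro prod.cong) auto
  also have "\<dots> = (\<Prod>b\<in>S. \<Prod>a\<in>{a. a \<in> S \<and> a \<noteq> b}. g b)"
    by (rule prod.swap_restrict) (use assms in auto)
  also have "\<dots> = (\<Prod>b\<in>S. g b ^ (card S - 1))"
  proof (intro prod.cong refl)
    fix b assume "b \<in> S"
    then have "{a. a \<in> S \<and> a \<noteq> b} = S - {b}" by auto
    then show "(\<Prod>a\<in>{a. a \<in> S \<and> a \<noteq> b}. g b) = g b ^ (card S - 1)"
      using \<open>b \<in> S\<close> assms by simp
  qed
  finally show ?thesis .
qed

lemma prod_offdiag_permute: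
  assumes "\<pi> permutes S"
  shows "(\<Prod>a\<in>S. \<Prod>b\<in>S-{a}. h (\<pi> a) (\<pi> b)) = (\<Prod>a\<in>S. \<Prod>b\<in>S-{a}. h a b)"
proof -
  have row: "(\<Prod>b\<in>S-{a}. h (\<pi> a) (\<pi> b)) = (\<Prod>b\<in>S-{\<pi> a}. h (\<pi> a) b)" if "a \<in> S" for a
  proof -
    have "\<pi> ` (S-{a}) = S-{\<pi> a}"
      using permutes_image[OF assms] permutes_inj[OF assms] by (auto simp: inj_eq)
    moreover have "inj_on \<pi> (S-{a})"
      using permutes_inj[OF assms] by (auto intro: inj_on_subset)
    ultimately show ?thesis
      using prod.reindex[of \<pi> "S-{a}" "h (\<pi> a)"] by simp
  qed
  have "(\<Prod>a\<in>S. \<Prod>b\<in>S-{a}. h (\<pi> a) (\<pi> b)) = (\<Prod>a\<in>S. \<Prod>b\<in>S-{\<pi> a}. h (\<pi> a) b)"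
    by (intro prod.cong refl row)
  also have "\<dots> = (\<Prod>a\<in>S. \<Prod>b\<in>S-{a}. h a b)"
    using prod.permute[OF assms, of "\<lambda>a. \<Prod>b\<in>S-{a}. h a b"] by (simp add: o_def)
  finally show ?thesis .
qed

lemma sign_compose_permutes:
  "finite S \<Longrightarrow> \<pi> permutes S \<Longrightarrow> \<sigma> permutes S \<Longrightarrow> sign (\<pi> \<circ> \<sigma>) = sign \<pi> * sign \<sigma>"
  by (intro sign_compose permutes_imp_permutation)

lemma sum_permutations_sign_compose_left:
  fixes f :: "('a \<Rightarrow> 'a) \<Rightarrow> 'b::comm_ring_1"
  assumes "finite S" "\<pi> permutes S"
  shows "(\<Sum>\<sigma> | \<sigma> permutes S. of_int (sign \<sigma>) * f (\<pi> \<circ> \<sigma>)) =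
         of_int (sign \<pi>) * (\<Sum>\<sigma> | \<sigma> permutes S. of_int (sign \<sigma>) * f \<sigma>)"
proof -
  have "(\<Sum>\<sigma> | \<sigma> permutes S. of_int (sign \<sigma>) * f \<sigma>) =
        (\<Sum>\<sigma> | \<sigma> permutes S. of_int (sign (\<pi> \<circ> \<sigma>)) * f (\<pi> \<circ> \<sigma>))"
    by (rule setum_permutations_compose_left[OF assms(2)])
  also have "\<dots> = of_int (sign \<pi>) * (\<Sum>\<sigma> | \<sigma> permutes S. of_int (sign \<sigma>) * f (\<pi> \<circ> \<sigma>))"
    by (simp add: sum_distrib_left sign_compose_permutes[OF assms] mult.assoc)
  finally show ?thesis
    by (simp flip: mult.assoc of_int_mult)
qed

lemma permutes_insert_preimage:
  assumes "\<sigma> permutes insert x S" "\<sigma> x \<noteq> x"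
  obtains k where "k \<in> S" "\<sigma> k = x"
proof -
  have "x \<in> \<sigma> ` insert x S"
    unfolding permutes_image[OF assms(1)] by (rule insertI1)
  then obtain k where k: "k \<in> insert x S" "\<sigma> k = x"
    by blast
  with assms(2) have "k \<in> S"
    by (cases "k = x") simp_all
  then show ?thesis
    using k(2) by (rule that)
qed

lemma sum_permutations_insert_fixing:
  assumes "finite S" "x \<notin> S"
    and vanish: "\<And>\<sigma>. \<sigma> permutes insert x S \<Longrightarrow> \<sigma> x \<noteq> x \<Longrightarrow> g \<sigma> = 0"
  shows "(\<Sum>\<sigma> | \<sigma> permutes insert x S. g \<sigma>) = (\<Sum>\<tau> | \<tau> permutes S. g \<tau>)"
proof -
  have moved: "(\<Sum>\<tau> | \<tau> permutes S. g (Transposition.transpose x b \<circ> \<tau>)) = 0"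
    if b: "b \<in> S" for b
  proof (intro sum.neutral ballI)
    fix \<tau> assume "\<tau> \<in> {\<tau>. \<tau> permutes S}"
    then have \<tau>: "\<tau> permutes insert x S" "\<tau> x = x"
      using assms(2) by (auto intro: permutes_subset permutes_not_in)
    have "Transposition.transpose x b \<circ> \<tau> permutes insert x S"
      using b by (intro permutes_compose[OF \<tau>(1)] permutes_swap_id) auto
    then show "g (Transposition.transpose x b \<circ> \<tau>) = 0"
      using \<tau>(2) b assms(2) by (intro vanish) auto
  qed
  have "(\<Sum>\<sigma> | \<sigma> permutes insert x S. g \<sigma>) =
      (\<Sum>b\<in>insert x S. \<Sum>\<tau> | \<tau> permutes S. g (Transposition.transpose x b \<circ> \<tau>))"
    by (rule sum_over_permutations_insert[OF assms(1,2)])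
  also have "\<dots> = (\<Sum>\<tau> | \<tau> permutes S. g \<tau>) +
      (\<Sum>b\<in>S. \<Sum>\<tau> | \<tau> permutes S. g (Transposition.transpose x b \<circ> \<tau>))"
    using assms(1,2) by simp
  also have "(\<Sum>b\<in>S. \<Sum>\<tau> | \<tau> permutes S. g (Transposition.transpose x b \<circ> \<tau>)) = 0"
    using moved by (intro sum.neutral) auto
  finally show ?thesis by simp
qed

lemma sum_permutations_map_permutation:
  assumes "bij_betw f A B"
  shows "(\<Sum>q | q permutes B. F q) = (\<Sum>p | p permutes A. F (map_permutation A f p))"
proof (rule sum.reindex_bij_witness[of _ "map_permutation A f" "map_permutation B (inv_into A f)"])
  have f_inv: "f (inv_into A f y) = y" if "y \<in> B" for y
    using assms that by (auto simp: bij_betw_def f_inv_into_f)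
  fix q assume "q \<in> {q. q permutes B}"
  then have q: "q permutes B" by simp
  show "map_permutation A f (map_permutation B (inv_into A f) q) = q"
    by (rule map_permutation_compose_inv[OF bij_betw_inv_into[OF assms] q f_inv])
  then show "F (map_permutation A f (map_permutation B (inv_into A f) q)) = F q"
    by simp
  show "map_permutation B (inv_into A f) q \<in> {p. p permutes A}"
    using map_permutation_permutes[OF bij_betw_inv_into[OF assms] q] by simp
next
  fix p assume "p \<in> {p. p permutes A}"
  then have p: "p permutes A" by simp
  have inv_f: "inv_into A f (f x) = x" if "x \<in> A" for x
    using assms that by (auto simp: bij_betw_def)
  show "map_permutation B (inv_into A f) (map_permutation A f p) = p"
    by (rule map_permutation_compose_inv[OF assms p inv_f])
  show "map_permutation A f p \<in> {q. q permutes B}"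
    using map_permutation_permutes[OF assms p] by simp
qed

section \<open>Alternating sums with a general difference function\<close>

(* With d u v = sinh (u - v), X = shift_plus and Y = shift_minus this is s!(m-s)! G_s,
   see G_eq_Gsum; the rational counterpart is d = (-). *)
definition Gsum :: "('a \<Rightarrow> 'a \<Rightarrow> 'b::field) \<Rightarrow> nat \<Rightarrow> (nat \<Rightarrow> 'a) \<Rightarrow> (nat \<Rightarrow> 'a) \<Rightarrow> (nat \<Rightarrow> 'a) \<Rightarrow> 'b"
  where "Gsum d m X Y \<xi> = (\<Sum>\<sigma> | \<sigma> permutes {1..m}. of_int (sign \<sigma>) *
     (\<Prod>(k, j)\<in>index_pairs m. d (X (\<sigma> j)) (\<xi> k) * d (Y (\<sigma> k)) (\<xi> j) / d (X (\<sigma> j)) (Y (\<sigma> k))))"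

(* For d u v = sinh (u - v) this is the numerator of Z_m expanded along permutations,
   see Z_eq_Zsum. *)
definition Zsum :: "('a \<Rightarrow> 'a \<Rightarrow> 'b::comm_ring_1) \<Rightarrow> nat \<Rightarrow> (nat \<Rightarrow> 'a) \<Rightarrow> (nat \<Rightarrow> 'a) \<Rightarrow> (nat \<Rightarrow> 'a) \<Rightarrow> 'b"
  where "Zsum d m X Y \<xi> = (\<Sum>\<sigma> | \<sigma> permutes {1..m}. of_int (sign \<sigma>) *
     (\<Prod>p\<in>{1..m}. \<Prod>b\<in>{1..m}-{p}. d (X (\<sigma> p)) (\<xi> b) * d (Y (\<sigma> p)) (\<xi> b)))"

definition cross_prod :: "('a \<Rightarrow> 'a \<Rightarrow> 'b::comm_ring_1) \<Rightarrow> nat \<Rightarrow> (nat \<Rightarrow> 'a) \<Rightarrow> (nat \<Rightarrow> 'a) \<Rightarrow> 'b"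
  where "cross_prod d m X Y = (\<Prod>a\<in>{1..m}. \<Prod>b\<in>{1..m}-{a}. d (X a) (Y b))"

definition vandermonde :: "('a \<Rightarrow> 'a \<Rightarrow> 'b::comm_ring_1) \<Rightarrow> nat \<Rightarrow> (nat \<Rightarrow> 'a) \<Rightarrow> 'b"
  where "vandermonde d m \<xi> = (\<Prod>(k, j)\<in>index_pairs m. d (\<xi> j) (\<xi> k))"

lemma Gsum_permute:
  assumes "\<pi> permutes {1..m}"
  shows "Gsum d m (X \<circ> \<pi>) (Y \<circ> \<pi>) \<xi> = of_int (sign \<pi>) * Gsum d m X Y \<xi>"
  unfolding Gsum_def
  using sum_permutations_sign_compose_left[OF finite_atLeastAtMost assms,
      of "\<lambda>\<rho>. \<Prod>(k, j)\<in>index_pairs m. d (X (\<rho> j)) (\<xi> k) * d (Y (\<rho> k)) (\<xi> j) / d (X (\<rho> j)) (Y (\<rho> k))"]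
  by simp

lemma Zsum_permute:
  assumes "\<pi> permutes {1..m}"
  shows "Zsum d m (X \<circ> \<pi>) (Y \<circ> \<pi>) \<xi> = of_int (sign \<pi>) * Zsum d m X Y \<xi>"
  unfolding Zsum_def
  using sum_permutations_sign_compose_left[OF finite_atLeastAtMost assms,
      of "\<lambda>\<rho>. \<Prod>p\<in>{1..m}. \<Prod>b\<in>{1..m}-{p}. d (X (\<rho> p)) (\<xi> b) * d (Y (\<rho> p)) (\<xi> b)"]
  by simp

lemma cross_prod_permute:
  assumes "\<pi> permutes {1..m}"
  shows "cross_prod d m (X \<circ> \<pi>) (Y \<circ> \<pi>) = cross_prod d m X Y"
  unfolding cross_prod_def using prod_offdiag_permute[OF assms, of "\<lambda>a b. d (X a) (Y b)"] by simp

lemma cross_prod_Suc: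
  "cross_prod d (Suc n) X Y = cross_prod d n X Y * (\<Prod>c\<in>{1..n}. d (X (Suc n)) (Y c) * d (X c) (Y (Suc n)))"
  unfolding cross_prod_def by (rule prod_offdiag_Suc)

lemma vandermonde_fun_upd_Suc:
  "vandermonde d (Suc n) (\<xi>(Suc n := z)) = vandermonde d n \<xi> * (\<Prod>k\<in>{1..n}. d z (\<xi> k))"
  unfolding vandermonde_def prod_index_pairs_Suc
  by (intro arg_cong2[where f = "(*)"] prod.cong) (auto simp: index_pairs_def)

(* The terms of sigma and sigma o (k l) cancel; pairing them (instead of showing
   Zsum = - Zsum) also works in characteristic 2. *)
lemma Zsum_eq_0_if_coincide:
  assumes "k \<in> {1..m}" "l \<in> {1..m}" "k \<noteq> l" "\<xi> k = \<xi> l"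
  shows "Zsum d m X Y \<xi> = 0"
proof -
  define t where "t = Transposition.transpose k l"
  have t: "t permutes {1..m}"
    unfolding t_def using assms by (intro permutes_swap_id) auto
  have sign_t: "sign t = -1"
    unfolding t_def using assms(3) by (simp add: sign_swap_id)
  have \<xi>_t: "\<xi> (t b) = \<xi> b" for b
    using assms(4) unfolding t_def by (cases "b = k"; cases "b = l") auto
  define f where "f \<sigma> = of_int (sign \<sigma>) *
    (\<Prod>p\<in>{1..m}. \<Prod>b\<in>{1..m}-{p}. d (X (\<sigma> p)) (\<xi> b) * d (Y (\<sigma> p)) (\<xi> b))" for \<sigma>
  have "(\<Sum>\<sigma> | \<sigma> permutes {1..m}. f \<sigma>) = 0"
  proof (rule sum_involution_eq_0[where h = "\<lambda>\<sigma>. \<sigma> \<circ> t"])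
    fix \<sigma> assume "\<sigma> \<in> {\<sigma>. \<sigma> permutes {1..m}}"
    then have \<sigma>: "\<sigma> permutes {1..m}" by simp
    show "f (\<sigma> \<circ> t) + f \<sigma> = 0"
      using prod_offdiag_permute[OF t, of "\<lambda>p b. d (X (\<sigma> p)) (\<xi> b) * d (Y (\<sigma> p)) (\<xi> b)"]
        sign_compose_permutes[OF finite_atLeastAtMost \<sigma> t]
      by (simp add: f_def \<xi>_t sign_t)
    show "\<sigma> \<circ> t \<in> {\<sigma>. \<sigma> permutes {1..m}}"
      using permutes_compose[OF t \<sigma>] by simp
    show "\<sigma> \<circ> t \<circ> t = \<sigma>"
      by (simp add: t_def comp_assoc)
    have "\<sigma> l \<noteq> \<sigma> k"
      using permutes_inj[OF \<sigma>] assms(3) by (auto dest: injD)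
    moreover have "(\<sigma> \<circ> t) k = \<sigma> l"
      by (simp add: t_def)
    ultimately show "\<sigma> \<circ> t \<noteq> \<sigma>"
      by (metis (no_types))
  qed
  then show ?thesis
    unfolding Zsum_def f_def .
qed

lemma Zsum_eq_sum_inverse:
  "Zsum d m X Y \<xi> = (\<Sum>q | q permutes {1..m}. of_int (sign q) *
     (\<Prod>a\<in>{1..m}. \<Prod>b\<in>{1..m}-{q a}. d (X a) (\<xi> b) * d (Y a) (\<xi> b)))"
proof -
  have "Zsum d m X Y \<xi> = (\<Sum>q | q permutes {1..m}. of_int (sign (inv_into UNIV q)) *
     (\<Prod>p\<in>{1..m}. \<Prod>b\<in>{1..m}-{p}. d (X (inv_into UNIV q p)) (\<xi> b) * d (Y (inv_into UNIV q p)) (\<xi> b)))"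
    unfolding Zsum_def by (rule sum_permutations_inverse)
  also have "\<dots> = (\<Sum>q | q permutes {1..m}. of_int (sign q) *
     (\<Prod>a\<in>{1..m}. \<Prod>b\<in>{1..m}-{q a}. d (X a) (\<xi> b) * d (Y a) (\<xi> b)))"
  proof (intro sum.cong refl arg_cong2[where f = "(*)"])
    fix q assume "q \<in> {q. q permutes {1..m}}"
    then have q: "q permutes {1..m}" by simp
    show "of_int (sign (inv_into UNIV q)) = of_int (sign q)"
      by (simp add: sign_inverse permutes_imp_permutation[OF _ q])
    show "(\<Prod>p\<in>{1..m}. \<Prod>b\<in>{1..m}-{p}. d (X (inv_into UNIV q p)) (\<xi> b) * d (Y (inv_into UNIV q p)) (\<xi> b)) =
        (\<Prod>a\<in>{1..m}. \<Prod>b\<in>{1..m}-{q a}. d (X a) (\<xi> b) * d (Y a) (\<xi> b))"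
      using prod.permute[OF q, of "\<lambda>p. \<Prod>b\<in>{1..m}-{p}. d (X (inv_into UNIV q p)) (\<xi> b) * d (Y (inv_into UNIV q p)) (\<xi> b)"]
      by (simp add: o_def permutes_inverses(2)[OF q])
  qed
  finally show ?thesis .
qed

section \<open>The rational identity\<close>

lemma Gsum_minus_fun_upd_last:
  fixes X Y \<xi> :: "nat \<Rightarrow> 'a::field"
  shows "Gsum (-) (Suc n) X Y (\<xi>(Suc n := Y (Suc n))) =
    (\<Prod>k\<in>{1..n}. X (Suc n) - \<xi> k) * (\<Prod>c\<in>{1..n}. (Y c - Y (Suc n)) / (X (Suc n) - Y c)) *
    Gsum (-) n X Y \<xi>"
proof -
  define T where "T m \<eta> \<sigma> = (\<Prod>(k, j)\<in>index_pairs m.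
      (X (\<sigma> j) - \<eta> k) * (Y (\<sigma> k) - \<eta> j) / (X (\<sigma> j) - Y (\<sigma> k)))"
    for m \<eta> and \<sigma> :: "nat \<Rightarrow> nat"
  define h where "h c = (Y c - Y (Suc n)) / (X (Suc n) - Y c)" for c
  let ?\<xi> = "\<xi>(Suc n := Y (Suc n))"
  have Gsum_T: "Gsum (-) m X Y \<eta> = (\<Sum>\<sigma> | \<sigma> permutes {1..m}. of_int (sign \<sigma>) * T m \<eta> \<sigma>)" for m \<eta>
    unfolding Gsum_def T_def ..
  have T_Suc: "T (Suc n) ?\<xi> \<sigma> = T n \<xi> \<sigma> * (\<Prod>k\<in>{1..n}.
      (X (\<sigma> (Suc n)) - \<xi> k) * (Y (\<sigma> k) - Y (Suc n)) / (X (\<sigma> (Suc n)) - Y (\<sigma> k)))" for \<sigma>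
    unfolding T_def prod_index_pairs_Suc
    by (intro arg_cong2[where f = "(*)"] prod.cong refl) (clarsimp simp: index_pairs_def)+
  have "of_int (sign \<sigma>) * T (Suc n) ?\<xi> \<sigma> = 0"
    if \<sigma>: "\<sigma> permutes insert (Suc n) {1..n}" "\<sigma> (Suc n) \<noteq> Suc n" for \<sigma>
  proof -
    obtain k where k: "k \<in> {1..n}" "\<sigma> k = Suc n"
      using permutes_insert_preimage[OF \<sigma>] .
    have "(\<Prod>k\<in>{1..n}. (X (\<sigma> (Suc n)) - \<xi> k) * (Y (\<sigma> k) - Y (Suc n)) /
        (X (\<sigma> (Suc n)) - Y (\<sigma> k))) = 0"
      by (intro prod_zero finite_atLeastAtMost bexI[OF _ k(1)]) (simp add: k(2))
    then show ?thesis
      unfolding T_Suc by simp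
  qed
  moreover have ivl: "{1..Suc n} = insert (Suc n) {1..n}" by auto
  ultimately have "Gsum (-) (Suc n) X Y ?\<xi> =
      (\<Sum>\<tau> | \<tau> permutes {1..n}. of_int (sign \<tau>) * T (Suc n) ?\<xi> \<tau>)"
    unfolding Gsum_T ivl by (intro sum_permutations_insert_fixing) auto
  also have "\<dots> = (\<Sum>\<tau> | \<tau> permutes {1..n}. of_int (sign \<tau>) *
      (T n \<xi> \<tau> * ((\<Prod>k\<in>{1..n}. X (Suc n) - \<xi> k) * (\<Prod>c\<in>{1..n}. h c))))"
  proof (intro sum.cong refl arg_cong2[where f = "(*)"])
    fix \<tau> assume "\<tau> \<in> {\<tau>. \<tau> permutes {1..n}}"
    then have \<tau>: "\<tau> permutes {1..n}" by simp
    have "(\<Prod>k\<in>{1..n}. (X (\<tau> (Suc n)) - \<xi> k) * (Y (\<tau> k) - Y (Suc n)) / (X (\<tau> (Suc n)) - Y (\<tau> k)))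
        = (\<Prod>k\<in>{1..n}. (X (Suc n) - \<xi> k) * h (\<tau> k))"
      using permutes_not_in[OF \<tau>] by (simp add: h_def times_divide_eq_right)
    also have "\<dots> = (\<Prod>k\<in>{1..n}. X (Suc n) - \<xi> k) * (\<Prod>c\<in>{1..n}. h c)"
      using prod.permute[OF \<tau>, of h] by (simp add: prod.distrib o_def)
    finally show "T (Suc n) ?\<xi> \<tau> = T n \<xi> \<tau> * ((\<Prod>k\<in>{1..n}. X (Suc n) - \<xi> k) * (\<Prod>c\<in>{1..n}. h c))"
      unfolding T_Suc by simp
  qed
  also have "\<dots> = (\<Prod>k\<in>{1..n}. X (Suc n) - \<xi> k) * (\<Prod>c\<in>{1..n}. h c) * Gsum (-) n X Y \<xi>"
    unfolding Gsum_T sum_distrib_left by (simp add: mult_ac)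
  finally show ?thesis
    unfolding h_def .
qed

lemma Zsum_minus_fun_upd_last:
  fixes X Y \<xi> :: "nat \<Rightarrow> 'a::comm_ring_1"
  shows "Zsum (-) (Suc n) X Y (\<xi>(Suc n := Y (Suc n))) =
    (\<Prod>k\<in>{1..n}. (X (Suc n) - \<xi> k) * (Y (Suc n) - \<xi> k)) *
    (\<Prod>c\<in>{1..n}. (X c - Y (Suc n)) * (Y c - Y (Suc n))) * Zsum (-) n X Y \<xi>"
proof -
  define T where "T m \<eta> \<sigma> = (\<Prod>p\<in>{1..m}. \<Prod>b\<in>{1..m}-{p}. (X (\<sigma> p) - \<eta> b) * (Y (\<sigma> p) - \<eta> b))"
    for m \<eta> and \<sigma> :: "nat \<Rightarrow> nat"
  define h where "h c = (X c - Y (Suc n)) * (Y c - Y (Suc n))" for c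
  let ?\<xi> = "\<xi>(Suc n := Y (Suc n))"
  have Zsum_T: "Zsum (-) m X Y \<eta> = (\<Sum>\<sigma> | \<sigma> permutes {1..m}. of_int (sign \<sigma>) * T m \<eta> \<sigma>)" for m \<eta>
    unfolding Zsum_def T_def ..
  have T_Suc: "T (Suc n) ?\<xi> \<sigma> = T n \<xi> \<sigma> * (\<Prod>c\<in>{1..n}.
      (X (\<sigma> (Suc n)) - \<xi> c) * (Y (\<sigma> (Suc n)) - \<xi> c) * h (\<sigma> c))" for \<sigma>
    unfolding T_def prod_offdiag_Suc[of "\<lambda>p b. (X (\<sigma> p) - ?\<xi> b) * (Y (\<sigma> p) - ?\<xi> b)"]
    by (intro arg_cong2[where f = "(*)"] prod.cong refl) (auto simp: h_def)
  have "of_int (sign \<sigma>) * T (Suc n) ?\<xi> \<sigma> = 0"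
    if \<sigma>: "\<sigma> permutes insert (Suc n) {1..n}" "\<sigma> (Suc n) \<noteq> Suc n" for \<sigma>
  proof -
    obtain k where k: "k \<in> {1..n}" "\<sigma> k = Suc n"
      using permutes_insert_preimage[OF \<sigma>] .
    have "(\<Prod>c\<in>{1..n}. (X (\<sigma> (Suc n)) - \<xi> c) * (Y (\<sigma> (Suc n)) - \<xi> c) * h (\<sigma> c)) = 0"
      by (intro prod_zero finite_atLeastAtMost bexI[OF _ k(1)]) (simp add: k(2) h_def)
    then show ?thesis
      unfolding T_Suc by simp
  qed
  moreover have ivl: "{1..Suc n} = insert (Suc n) {1..n}" by auto
  ultimately have "Zsum (-) (Suc n) X Y ?\<xi> =
      (\<Sum>\<tau> | \<tau> permutes {1..n}. of_int (sign \<tau>) * T (Suc n) ?\<xi> \<tau>)"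
    unfolding Zsum_T ivl by (intro sum_permutations_insert_fixing) auto
  also have "\<dots> = (\<Sum>\<tau> | \<tau> permutes {1..n}. of_int (sign \<tau>) * (T n \<xi> \<tau> *
      ((\<Prod>k\<in>{1..n}. (X (Suc n) - \<xi> k) * (Y (Suc n) - \<xi> k)) * (\<Prod>c\<in>{1..n}. h c))))"
  proof (intro sum.cong refl arg_cong2[where f = "(*)"])
    fix \<tau> assume "\<tau> \<in> {\<tau>. \<tau> permutes {1..n}}"
    then have \<tau>: "\<tau> permutes {1..n}" by simp
    show "T (Suc n) ?\<xi> \<tau> = T n \<xi> \<tau> *
        ((\<Prod>k\<in>{1..n}. (X (Suc n) - \<xi> k) * (Y (Suc n) - \<xi> k)) * (\<Prod>c\<in>{1..n}. h c))"
      unfolding T_Suc prod.distrib prod.permute[OF \<tau>, of h]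
      using permutes_not_in[OF \<tau>] by (simp add: o_def)
  qed
  also have "\<dots> = (\<Prod>k\<in>{1..n}. (X (Suc n) - \<xi> k) * (Y (Suc n) - \<xi> k)) * (\<Prod>c\<in>{1..n}. h c) *
      Zsum (-) n X Y \<xi>"
    unfolding Zsum_T sum_distrib_left by (simp add: mult_ac)
  finally show ?thesis
    unfolding h_def .
qed

lemma polyfun_le_Gsum_minus:
  fixes X Y \<xi> :: "nat \<Rightarrow> 'a::field"
  shows "polyfun_le n (\<lambda>z. Gsum (-) (Suc n) X Y (\<xi>(Suc n := z)))"
  unfolding Gsum_def
proof (intro polyfun_le_sum finite_permutations finite_atLeastAtMost)
  fix \<sigma> :: "nat \<Rightarrow> nat"
  have "polyfun_le (\<Sum>(k, j)\<in>index_pairs (Suc n). if j = Suc n then 1 else 0)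
      (\<lambda>z. \<Prod>(k, j)\<in>index_pairs (Suc n). (X (\<sigma> j) - (\<xi>(Suc n := z)) k) *
         (Y (\<sigma> k) - (\<xi>(Suc n := z)) j) / (X (\<sigma> j) - Y (\<sigma> k)))"
  proof (intro polyfun_le_prod finite_index_pairs)
    fix i assume "i \<in> index_pairs (Suc n)"
    then obtain k j where i: "i = (k, j)" and "k \<noteq> Suc n" by (auto simp: index_pairs_def)
    then show "polyfun_le (case i of (k, j) \<Rightarrow> if j = Suc n then 1 else 0)
        (\<lambda>z. case i of (k, j) \<Rightarrow> (X (\<sigma> j) - (\<xi>(Suc n := z)) k) *
           (Y (\<sigma> k) - (\<xi>(Suc n := z)) j) / (X (\<sigma> j) - Y (\<sigma> k)))"
      using polyfun_le_divide_const[OF polyfun_le_mult[OF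
          polyfun_le_const_minus_fun_upd[of k "Suc n" "X (\<sigma> j)" \<xi>]
          polyfun_le_const_minus_fun_upd[of j "Suc n" "Y (\<sigma> k)" \<xi>]], of "X (\<sigma> j) - Y (\<sigma> k)"]
      by simp
  qed
  from polyfun_le_mult[OF polyfun_le_const[of 0 "of_int (sign \<sigma>)"] this]
  show "polyfun_le n (\<lambda>z. of_int (sign \<sigma>) * (\<Prod>(k, j)\<in>index_pairs (Suc n).
      (X (\<sigma> j) - (\<xi>(Suc n := z)) k) * (Y (\<sigma> k) - (\<xi>(Suc n := z)) j) / (X (\<sigma> j) - Y (\<sigma> k))))"
    by (simp only: add_0 sum_index_pairs_last_column)
qed

lemma polyfun_le_vandermonde_minus:
  fixes \<xi> :: "nat \<Rightarrow> 'a::comm_ring_1"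
  shows "polyfun_le n (\<lambda>z. vandermonde (-) (Suc n) (\<xi>(Suc n := z)))"
proof -
  have "polyfun_le (0 + (\<Sum>k\<in>{1..n}. 1)) (\<lambda>z. vandermonde (-) n \<xi> * (\<Prod>k\<in>{1..n}. z - \<xi> k))"
    by (intro polyfun_le_mult polyfun_le_const polyfun_le_prod polyfun_le_ident_minus_const) simp
  then show ?thesis
    unfolding vandermonde_fun_upd_Suc by simp
qed

lemma polyfun_le_Zsum_minus:
  fixes X Y \<xi> :: "nat \<Rightarrow> 'a::comm_ring_1"
  shows "polyfun_le (2 * n) (\<lambda>z. Zsum (-) (Suc n) X Y (\<xi>(Suc n := z)))"
  unfolding Zsum_def
proof (intro polyfun_le_sum finite_permutations finite_atLeastAtMost)
  fix \<sigma> :: "nat \<Rightarrow> nat"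
  have row: "polyfun_le (if p = Suc n then 0 else 2) (\<lambda>z. \<Prod>b\<in>{1..Suc n}-{p}.
      (X (\<sigma> p) - (\<xi>(Suc n := z)) b) * (Y (\<sigma> p) - (\<xi>(Suc n := z)) b))" for p
  proof -
    have "(\<Sum>b\<in>{1..Suc n}-{p}. (if b = Suc n then 1 else 0) + (if b = Suc n then 1 else 0)) =
        (\<Sum>b\<in>{1..Suc n}-{p}. if b = Suc n then 2 else (0::nat))"
      by (intro sum.cong) auto
    also have "\<dots> = (if p = Suc n then 0 else 2)"
      by (subst sum.delta) auto
    finally have deg: "(\<Sum>b\<in>{1..Suc n}-{p}. (if b = Suc n then 1 else 0) + (if b = Suc n then 1 else 0)) =
        (if p = Suc n then 0 else (2::nat))" .
    show ?thesis
      unfolding deg[symmetric] by (intro polyfun_le_prod polyfun_le_mult polyfun_le_const_minus_fun_upd) auto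
  qed
  have "(\<Sum>p\<in>{1..n}. if p = Suc n then 0 else 2) = (\<Sum>p\<in>{1..n}. 2::nat)"
    by (intro sum.cong) auto
  then have deg: "(\<Sum>p\<in>{1..Suc n}. if p = Suc n then 0 else 2) = 2 * n"
    by (subst sum.nat_ivl_Suc') simp_all
  have "polyfun_le (2 * n) (\<lambda>z. \<Prod>p\<in>{1..Suc n}.
      \<Prod>b\<in>{1..Suc n}-{p}. (X (\<sigma> p) - (\<xi>(Suc n := z)) b) * (Y (\<sigma> p) - (\<xi>(Suc n := z)) b))"
    unfolding deg[symmetric] by (intro polyfun_le_prod row) simp
  from polyfun_le_mult[OF polyfun_le_const[of 0 "of_int (sign \<sigma>)"] this]
  show "polyfun_le (2 * n) (\<lambda>z. of_int (sign \<sigma>) * (\<Prod>p\<in>{1..Suc n}.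
      \<Prod>b\<in>{1..Suc n}-{p}. (X (\<sigma> p) - (\<xi>(Suc n := z)) b) * (Y (\<sigma> p) - (\<xi>(Suc n := z)) b)))"
    by simp
qed

lemma Gsum_cross_vandermonde_minus_fun_upd_last:
  fixes X Y \<xi> :: "nat \<Rightarrow> 'a::field"
  assumes "\<And>c. c \<in> {1..n} \<Longrightarrow> X (Suc n) \<noteq> Y c"
    and "Gsum (-) n X Y \<xi> * cross_prod (-) n X Y * vandermonde (-) n \<xi> = Zsum (-) n X Y \<xi>"
  shows "Gsum (-) (Suc n) X Y (\<xi>(Suc n := Y (Suc n))) * cross_prod (-) (Suc n) X Y *
      vandermonde (-) (Suc n) (\<xi>(Suc n := Y (Suc n))) = Zsum (-) (Suc n) X Y (\<xi>(Suc n := Y (Suc n)))"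
proof -
  have cancel: "(\<Prod>c\<in>{1..n}. (Y c - Y (Suc n)) / (X (Suc n) - Y c)) *
      (\<Prod>c\<in>{1..n}. (X (Suc n) - Y c) * (X c - Y (Suc n))) =
      (\<Prod>c\<in>{1..n}. (X c - Y (Suc n)) * (Y c - Y (Suc n)))"
    unfolding prod.distrib[symmetric] using assms(1) by (intro prod.cong refl) (simp add: field_simps)
  have "Gsum (-) (Suc n) X Y (\<xi>(Suc n := Y (Suc n))) * cross_prod (-) (Suc n) X Y *
      vandermonde (-) (Suc n) (\<xi>(Suc n := Y (Suc n))) =
      (Gsum (-) n X Y \<xi> * cross_prod (-) n X Y * vandermonde (-) n \<xi>) *
      ((\<Prod>k\<in>{1..n}. X (Suc n) - \<xi> k) * (\<Prod>k\<in>{1..n}. Y (Suc n) - \<xi> k)) *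
      ((\<Prod>c\<in>{1..n}. (Y c - Y (Suc n)) / (X (Suc n) - Y c)) *
       (\<Prod>c\<in>{1..n}. (X (Suc n) - Y c) * (X c - Y (Suc n))))"
    unfolding Gsum_minus_fun_upd_last cross_prod_Suc vandermonde_fun_upd_Suc by (simp add: mult_ac)
  also have "\<dots> = Zsum (-) n X Y \<xi> *
      ((\<Prod>k\<in>{1..n}. X (Suc n) - \<xi> k) * (\<Prod>k\<in>{1..n}. Y (Suc n) - \<xi> k)) *
      (\<Prod>c\<in>{1..n}. (X c - Y (Suc n)) * (Y c - Y (Suc n)))"
    by (simp only: assms(2) cancel)
  also have "\<dots> = Zsum (-) (Suc n) X Y (\<xi>(Suc n := Y (Suc n)))"
    unfolding Zsum_minus_fun_upd_last prod.distrib by (simp add: mult_ac)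
  finally show ?thesis .
qed

lemma Gsum_cross_vandermonde_minus:
  fixes X Y \<xi> :: "nat \<Rightarrow> 'a::field"
  assumes "\<And>a b. a \<in> {1..m} \<Longrightarrow> b \<in> {1..m} \<Longrightarrow> a \<noteq> b \<Longrightarrow> X a \<noteq> Y b"
    and "inj_on Y {1..m}" and "inj_on \<xi> {1..m}"
    and "\<And>a k. a \<in> {1..m} \<Longrightarrow> k \<in> {1..m} \<Longrightarrow> Y a \<noteq> \<xi> k"
  shows "Gsum (-) m X Y \<xi> * cross_prod (-) m X Y * vandermonde (-) m \<xi> = Zsum (-) m X Y \<xi>"
  using assms
proof (induction m arbitrary: X Y \<xi>)
  case 0
  then show ?case
    by (simp add: Gsum_def Zsum_def cross_prod_def vandermonde_def)
next
  case (Suc n)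
  \<comment> \<open>A polynomial of degree at most 2n in z, vanishing at the n + 1 points Y a and the n points \<xi> k.\<close>
  define defect where "defect z = Gsum (-) (Suc n) X Y (\<xi>(Suc n := z)) * cross_prod (-) (Suc n) X Y *
      vandermonde (-) (Suc n) (\<xi>(Suc n := z)) - Zsum (-) (Suc n) X Y (\<xi>(Suc n := z))" for z
  have root_Y: "defect (Y a) = 0" if a: "a \<in> {1..Suc n}" for a
  proof -
    \<comment> \<open>Relabelling by the transposition that moves a to the last place multiplies both sides by its sign.\<close>
    define sw where "sw = Transposition.transpose (Suc n) a"
    have sw: "sw permutes {1..Suc n}"
      unfolding sw_def using a by (intro permutes_swap_id) auto
    have sw_in: "sw c \<in> {1..Suc n}" if "c \<in> {1..Suc n}" for c
      using permutes_in_image[OF sw] that by simp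
    have sw_in': "sw c \<in> {1..Suc n}" if "c \<in> {1..n}" for c
      using sw_in[of c] that by simp
    have sw_inj: "inj sw"
      by (rule permutes_inj[OF sw])
    have "Gsum (-) n (X \<circ> sw) (Y \<circ> sw) \<xi> * cross_prod (-) n (X \<circ> sw) (Y \<circ> sw) * vandermonde (-) n \<xi> =
        Zsum (-) n (X \<circ> sw) (Y \<circ> sw) \<xi>"
    proof (rule Suc.IH)
      show "(X \<circ> sw) a' \<noteq> (Y \<circ> sw) b'" if "a' \<in> {1..n}" "b' \<in> {1..n}" "a' \<noteq> b'" for a' b'
        using Suc.prems(1)[OF sw_in'[OF that(1)] sw_in'[OF that(2)]] sw_inj that(3) by (simp add: inj_eq)
      show "inj_on (Y \<circ> sw) {1..n}"
      proof (rule comp_inj_on)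
        show "inj_on sw {1..n}"
          using sw_inj by (rule inj_on_subset) simp
        show "inj_on Y (sw ` {1..n})"
          using Suc.prems(2) by (rule inj_on_subset) (use sw_in' in blast)
      qed
      show "inj_on \<xi> {1..n}"
        using Suc.prems(3) by (rule inj_on_subset) auto
      show "(Y \<circ> sw) a' \<noteq> \<xi> k" if "a' \<in> {1..n}" "k \<in> {1..n}" for a' k
        using Suc.prems(4)[OF sw_in'[OF that(1)], of k] that(2) by simp
    qed
    moreover have "(X \<circ> sw) (Suc n) \<noteq> (Y \<circ> sw) c" if "c \<in> {1..n}" for c
      using Suc.prems(1)[OF sw_in sw_in, of "Suc n" c] that sw_inj by (auto simp: inj_eq)
    ultimately have "Gsum (-) (Suc n) (X \<circ> sw) (Y \<circ> sw) (\<xi>(Suc n := (Y \<circ> sw) (Suc n))) *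
        cross_prod (-) (Suc n) (X \<circ> sw) (Y \<circ> sw) * vandermonde (-) (Suc n) (\<xi>(Suc n := (Y \<circ> sw) (Suc n))) =
        Zsum (-) (Suc n) (X \<circ> sw) (Y \<circ> sw) (\<xi>(Suc n := (Y \<circ> sw) (Suc n)))"
      by (intro Gsum_cross_vandermonde_minus_fun_upd_last)
    moreover have "(Y \<circ> sw) (Suc n) = Y a"
      by (simp add: sw_def)
    ultimately have "of_int (sign sw) * (Gsum (-) (Suc n) X Y (\<xi>(Suc n := Y a)) * cross_prod (-) (Suc n) X Y *
        vandermonde (-) (Suc n) (\<xi>(Suc n := Y a))) = of_int (sign sw) * Zsum (-) (Suc n) X Y (\<xi>(Suc n := Y a))"
      by (simp only: Gsum_permute[OF sw] Zsum_permute[OF sw] cross_prod_permute[OF sw] mult.assoc)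
    moreover have "of_int (sign sw) * of_int (sign sw) = (1::'a)"
      by (simp flip: of_int_mult)
    then have "of_int (sign sw) \<noteq> (0::'a)"
      by auto
    ultimately show ?thesis
      unfolding defect_def by simp
  qed
  have root_\<xi>: "defect (\<xi> k) = 0" if k: "k \<in> {1..n}" for k
  proof -
    have "(\<Prod>k'\<in>{1..n}. \<xi> k - \<xi> k') = 0"
      by (intro prod_zero finite_atLeastAtMost bexI[OF _ k]) simp
    then have "vandermonde (-) (Suc n) (\<xi>(Suc n := \<xi> k)) = 0"
      unfolding vandermonde_fun_upd_Suc by simp
    moreover have "Zsum (-) (Suc n) X Y (\<xi>(Suc n := \<xi> k)) = 0"
      by (rule Zsum_eq_0_if_coincide[of k _ "Suc n"]) (use k in auto)
    ultimately show ?thesis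
      unfolding defect_def by simp
  qed
  have "polyfun_le (n + 0 + n) (\<lambda>z. Gsum (-) (Suc n) X Y (\<xi>(Suc n := z)) * cross_prod (-) (Suc n) X Y *
      vandermonde (-) (Suc n) (\<xi>(Suc n := z)))"
    by (intro polyfun_le_mult polyfun_le_Gsum_minus polyfun_le_const polyfun_le_vandermonde_minus)
  then have deg: "polyfun_le (2 * n) defect"
    unfolding defect_def mult_2 by (intro polyfun_le_diff polyfun_le_Zsum_minus[unfolded mult_2]) simp
  have card: "card (Y ` {1..Suc n} \<union> \<xi> ` {1..n}) = Suc n + n"
  proof (subst card_Un_disjoint)
    show "Y ` {1..Suc n} \<inter> \<xi> ` {1..n} = {}"
      using Suc.prems(4) by fastforce
    show "card (Y ` {1..Suc n}) + card (\<xi> ` {1..n}) = Suc n + n"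
      using card_image[OF Suc.prems(2)] card_image[OF inj_on_subset[OF Suc.prems(3)]] by simp
  qed auto
  have "defect (\<xi> (Suc n)) = 0"
  proof (rule polyfun_le_eq_0[OF deg])
    show "2 * n < card (Y ` {1..Suc n} \<union> \<xi> ` {1..n})"
      unfolding card by simp
    show "defect r = 0" if "r \<in> Y ` {1..Suc n} \<union> \<xi> ` {1..n}" for r
      using that root_Y root_\<xi> by auto
  qed
  then show ?case
    unfolding defect_def by simp
qed

section \<open>Gauge factors\<close>

lemma Gsum_gauge:
  fixes d :: "'a \<Rightarrow> 'a \<Rightarrow> 'b::field"
  assumes d: "\<And>u v. d u v = (g u - g v) * h u * h v" and h: "\<And>u. h u \<noteq> 0"
  shows "Gsum d m X Y \<xi> =
    Gsum (-) m (g \<circ> X) (g \<circ> Y) (g \<circ> \<xi>) * (\<Prod>(k, j)\<in>index_pairs m. h (\<xi> k) * h (\<xi> j))"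
proof -
  have factor: "d x (\<xi> k) * d y (\<xi> j) / d x y =
      (g x - g (\<xi> k)) * (g y - g (\<xi> j)) / (g x - g y) * (h (\<xi> k) * h (\<xi> j))" for x y k j
    using h[of x] h[of y] by (cases "g x = g y") (simp_all add: d field_simps)
  show ?thesis
    unfolding Gsum_def sum_distrib_right
  proof (intro sum.cong refl)
    fix \<sigma> :: "nat \<Rightarrow> nat"
    have "(\<Prod>(k, j)\<in>index_pairs m. d (X (\<sigma> j)) (\<xi> k) * d (Y (\<sigma> k)) (\<xi> j) / d (X (\<sigma> j)) (Y (\<sigma> k))) =
        (\<Prod>(k, j)\<in>index_pairs m. ((g \<circ> X) (\<sigma> j) - (g \<circ> \<xi>) k) * ((g \<circ> Y) (\<sigma> k) - (g \<circ> \<xi>) j) /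
          ((g \<circ> X) (\<sigma> j) - (g \<circ> Y) (\<sigma> k))) * (\<Prod>(k, j)\<in>index_pairs m. h (\<xi> k) * h (\<xi> j))"
      unfolding prod.distrib[symmetric] by (intro prod.cong refl) (auto simp: factor)
    then show "of_int (sign \<sigma>) * (\<Prod>(k, j)\<in>index_pairs m.
          d (X (\<sigma> j)) (\<xi> k) * d (Y (\<sigma> k)) (\<xi> j) / d (X (\<sigma> j)) (Y (\<sigma> k))) =
        of_int (sign \<sigma>) * (\<Prod>(k, j)\<in>index_pairs m. ((g \<circ> X) (\<sigma> j) - (g \<circ> \<xi>) k) *
          ((g \<circ> Y) (\<sigma> k) - (g \<circ> \<xi>) j) / ((g \<circ> X) (\<sigma> j) - (g \<circ> Y) (\<sigma> k))) *
        (\<Prod>(k, j)\<in>index_pairs m. h (\<xi> k) * h (\<xi> j))"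
      by (simp only: mult.assoc)
  qed
qed

lemma cross_prod_gauge:
  fixes d :: "'a \<Rightarrow> 'a \<Rightarrow> 'b::comm_ring_1"
  assumes d: "\<And>u v. d u v = (g u - g v) * h u * h v"
  shows "cross_prod d m X Y = cross_prod (-) m (g \<circ> X) (g \<circ> Y) *
    ((\<Prod>a\<in>{1..m}. h (X a) ^ (m - 1)) * (\<Prod>b\<in>{1..m}. h (Y b) ^ (m - 1)))"
proof -
  have "(\<Prod>a\<in>{1..m}. \<Prod>b\<in>{1..m}-{a}. h (X a)) = (\<Prod>a\<in>{1..m}. h (X a) ^ (m - 1))"
    by (intro prod.cong refl) simp
  moreover have "(\<Prod>a\<in>{1..m}. \<Prod>b\<in>{1..m}-{a}. h (Y b)) = (\<Prod>b\<in>{1..m}. h (Y b) ^ (m - 1))"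
    by (simp add: prod_offdiag_const_row)
  ultimately show ?thesis
    unfolding cross_prod_def d by (simp add: prod.distrib)
qed

lemma vandermonde_gauge:
  fixes d :: "'a \<Rightarrow> 'a \<Rightarrow> 'b::comm_ring_1"
  assumes d: "\<And>u v. d u v = (g u - g v) * h u * h v"
  shows "vandermonde d m \<xi> =
    vandermonde (-) m (g \<circ> \<xi>) * (\<Prod>(k, j)\<in>index_pairs m. h (\<xi> j) * h (\<xi> k))"
  unfolding vandermonde_def d by (simp add: case_prod_beta prod.distrib mult.assoc)

lemma Zsum_gauge:
  fixes d :: "'a \<Rightarrow> 'a \<Rightarrow> 'b::comm_ring_1"
  assumes d: "\<And>u v. d u v = (g u - g v) * h u * h v"
  shows "Zsum d m X Y \<xi> = Zsum (-) m (g \<circ> X) (g \<circ> Y) (g \<circ> \<xi>) *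
    (((\<Prod>a\<in>{1..m}. h (X a) ^ (m - 1)) * (\<Prod>b\<in>{1..m}. h (Y b) ^ (m - 1))) *
     (\<Prod>b\<in>{1..m}. (h (\<xi> b) ^ 2) ^ (m - 1)))"
  unfolding Zsum_def sum_distrib_right
proof (intro sum.cong refl)
  fix \<sigma> assume "\<sigma> \<in> {\<sigma>. \<sigma> permutes {1..m}}"
  then have \<sigma>: "\<sigma> permutes {1..m}" by simp
  have "(\<Prod>p\<in>{1..m}. \<Prod>b\<in>{1..m}-{p}. d (X (\<sigma> p)) (\<xi> b) * d (Y (\<sigma> p)) (\<xi> b)) =
      (\<Prod>p\<in>{1..m}. \<Prod>b\<in>{1..m}-{p}. (g (X (\<sigma> p)) - g (\<xi> b)) * (g (Y (\<sigma> p)) - g (\<xi> b))) *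
      ((\<Prod>p\<in>{1..m}. \<Prod>b\<in>{1..m}-{p}. h (X (\<sigma> p)) * h (Y (\<sigma> p))) *
       (\<Prod>p\<in>{1..m}. \<Prod>b\<in>{1..m}-{p}. h (\<xi> b) ^ 2))"
    unfolding d prod.distrib[symmetric] by (intro prod.cong refl) (simp add: power2_eq_square mult_ac)
  also have "(\<Prod>p\<in>{1..m}. \<Prod>b\<in>{1..m}-{p}. h (X (\<sigma> p)) * h (Y (\<sigma> p))) =
      (\<Prod>a\<in>{1..m}. h (X a) ^ (m - 1)) * (\<Prod>b\<in>{1..m}. h (Y b) ^ (m - 1))"
    using prod.permute[OF \<sigma>, of "\<lambda>a. (h (X a) * h (Y a)) ^ (m - 1)"]
    by (simp add: o_def power_mult_distrib prod.distrib)
  also have "(\<Prod>p\<in>{1..m}. \<Prod>b\<in>{1..m}-{p}. h (\<xi> b) ^ 2) = (\<Prod>b\<in>{1..m}. (h (\<xi> b) ^ 2) ^ (m - 1))"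
    by (simp add: prod_offdiag_const_row)
  finally show "of_int (sign \<sigma>) * (\<Prod>p\<in>{1..m}. \<Prod>b\<in>{1..m}-{p}. d (X (\<sigma> p)) (\<xi> b) * d (Y (\<sigma> p)) (\<xi> b)) =
      of_int (sign \<sigma>) * (\<Prod>p\<in>{1..m}. \<Prod>b\<in>{1..m}-{p}.
        ((g \<circ> X) (\<sigma> p) - (g \<circ> \<xi>) b) * ((g \<circ> Y) (\<sigma> p) - (g \<circ> \<xi>) b)) *
      (((\<Prod>a\<in>{1..m}. h (X a) ^ (m - 1)) * (\<Prod>b\<in>{1..m}. h (Y b) ^ (m - 1))) *
       (\<Prod>b\<in>{1..m}. (h (\<xi> b) ^ 2) ^ (m - 1)))"
    by (simp add: mult.assoc)
qed

lemma Gsum_cross_vandermonde: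
  fixes d :: "'a \<Rightarrow> 'a \<Rightarrow> 'b::field"
  assumes d: "\<And>u v. d u v = (g u - g v) * h u * h v" and h: "\<And>u. h u \<noteq> 0"
    and XY: "\<And>a b. a \<in> {1..m} \<Longrightarrow> b \<in> {1..m} \<Longrightarrow> a \<noteq> b \<Longrightarrow> d (X a) (Y b) \<noteq> 0"
    and YY: "\<And>a b. a \<in> {1..m} \<Longrightarrow> b \<in> {1..m} \<Longrightarrow> a \<noteq> b \<Longrightarrow> d (Y a) (Y b) \<noteq> 0"
    and \<xi>\<xi>: "\<And>a b. a \<in> {1..m} \<Longrightarrow> b \<in> {1..m} \<Longrightarrow> a \<noteq> b \<Longrightarrow> d (\<xi> a) (\<xi> b) \<noteq> 0"
    and Y\<xi>: "\<And>a k. a \<in> {1..m} \<Longrightarrow> k \<in> {1..m} \<Longrightarrow> d (Y a) (\<xi> k) \<noteq> 0"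
  shows "Gsum d m X Y \<xi> * cross_prod d m X Y * vandermonde d m \<xi> = Zsum d m X Y \<xi>"
proof -
  have g_ne: "g u \<noteq> g v" if "d u v \<noteq> 0" for u v
    using that d by auto
  have inj: "inj_on (g \<circ> F) {1..m}"
    if "\<And>a b. a \<in> {1..m} \<Longrightarrow> b \<in> {1..m} \<Longrightarrow> a \<noteq> b \<Longrightarrow> d (F a) (F b) \<noteq> 0" for F
  proof (rule inj_onI, rule ccontr)
    fix a b assume "a \<in> {1..m}" "b \<in> {1..m}" "(g \<circ> F) a = (g \<circ> F) b" "a \<noteq> b"
    then show False
      using g_ne[OF that] by simp
  qed
  have rational: "Gsum (-) m (g \<circ> X) (g \<circ> Y) (g \<circ> \<xi>) * cross_prod (-) m (g \<circ> X) (g \<circ> Y) *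
      vandermonde (-) m (g \<circ> \<xi>) = Zsum (-) m (g \<circ> X) (g \<circ> Y) (g \<circ> \<xi>)"
    by (rule Gsum_cross_vandermonde_minus) (use g_ne[OF XY] g_ne[OF Y\<xi>] inj[OF YY] inj[OF \<xi>\<xi>] in auto)
  have weights: "(\<Prod>(k, j)\<in>index_pairs m. h (\<xi> k) * h (\<xi> j)) * (\<Prod>(k, j)\<in>index_pairs m. h (\<xi> j) * h (\<xi> k)) =
      (\<Prod>b\<in>{1..m}. (h (\<xi> b) ^ 2) ^ (m - 1))"
  proof -
    have "(\<Prod>(k, j)\<in>index_pairs m. h (\<xi> k) * h (\<xi> j)) * (\<Prod>(k, j)\<in>index_pairs m. h (\<xi> j) * h (\<xi> k)) =
        (\<Prod>(k, j)\<in>index_pairs m. h (\<xi> k) ^ 2 * h (\<xi> j) ^ 2)"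
      unfolding prod.distrib[symmetric] by (intro prod.cong refl) (auto simp: power2_eq_square)
    also have "\<dots> = (\<Prod>a\<in>{1..m}. \<Prod>b\<in>{1..m}-{a}. h (\<xi> b) ^ 2)"
      by (rule prod_offdiag_eq_prod_index_pairs[symmetric])
    also have "\<dots> = (\<Prod>b\<in>{1..m}. (h (\<xi> b) ^ 2) ^ (m - 1))"
      by (simp add: prod_offdiag_const_row)
    finally show ?thesis .
  qed
  have "Gsum d m X Y \<xi> * cross_prod d m X Y * vandermonde d m \<xi> =
      (Gsum (-) m (g \<circ> X) (g \<circ> Y) (g \<circ> \<xi>) * cross_prod (-) m (g \<circ> X) (g \<circ> Y) *
        vandermonde (-) m (g \<circ> \<xi>)) *
      ((\<Prod>a\<in>{1..m}. h (X a) ^ (m - 1)) * (\<Prod>b\<in>{1..m}. h (Y b) ^ (m - 1))) *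
      ((\<Prod>(k, j)\<in>index_pairs m. h (\<xi> k) * h (\<xi> j)) * (\<Prod>(k, j)\<in>index_pairs m. h (\<xi> j) * h (\<xi> k)))"
    unfolding Gsum_gauge[OF d h] cross_prod_gauge[OF d] vandermonde_gauge[OF d] by (simp only: mult_ac)
  also have "\<dots> = Zsum d m X Y \<xi>"
    unfolding rational weights Zsum_gauge[OF d] by (simp only: mult.assoc)
  finally show ?thesis .
qed

lemma sinh_diff_eq_exp:
  fixes u v :: complex
  shows "sinh (u - v) = (exp (2 * u) / 2 - exp (2 * v) / 2) * exp (- u) * exp (- v)"
proof -
  have "(exp (2 * u) / 2 - exp (2 * v) / 2) * exp (- u) * exp (- v) =
      ((exp (2 * u) - exp (2 * v)) * exp (- u) * exp (- v)) / 2"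
    by (simp add: field_simps)
  also have "(exp (2 * u) - exp (2 * v)) * exp (- u) * exp (- v) = exp (u - v) - exp (- (u - v))"
    by (simp add: algebra_simps flip: exp_add exp_diff)
  finally show ?thesis
    by (simp add: sinh_field_def)
qed

lemma Gsum_cross_vandermonde_sinh:
  fixes X Y \<xi> :: "nat \<Rightarrow> complex"
  defines "sh \<equiv> \<lambda>u v. sinh (u - v)"
  assumes "\<And>a b. a \<in> {1..m} \<Longrightarrow> b \<in> {1..m} \<Longrightarrow> a \<noteq> b \<Longrightarrow> sinh (X a - Y b) \<noteq> 0"
    and "\<And>a b. a \<in> {1..m} \<Longrightarrow> b \<in> {1..m} \<Longrightarrow> a \<noteq> b \<Longrightarrow> sinh (Y a - Y b) \<noteq> 0"
    and "\<And>a b. a \<in> {1..m} \<Longrightarrow> b \<in> {1..m} \<Longrightarrow> a \<noteq> b \<Longrightarrow> sinh (\<xi> a - \<xi> b) \<noteq> 0"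
    and "\<And>a k. a \<in> {1..m} \<Longrightarrow> k \<in> {1..m} \<Longrightarrow> sinh (Y a - \<xi> k) \<noteq> 0"
  shows "Gsum sh m X Y \<xi> * cross_prod sh m X Y * vandermonde sh m \<xi> = Zsum sh m X Y \<xi>"
  by (rule Gsum_cross_vandermonde[where g = "\<lambda>u. exp (2 * u) / 2" and h = "\<lambda>u. exp (- u)"])
    (use assms in \<open>simp_all add: sinh_diff_eq_exp\<close>)

section \<open>The six-vertex quantities\<close>

(* Jordan_Normal_Form matrices are indexed from 0, the matrix M from 1. *)
lemma det_mat_Suc_indexed:
  fixes f :: "nat \<Rightarrow> nat \<Rightarrow> 'a::comm_ring_1"
  shows "det (mat m m (\<lambda>(i, j). f (Suc i) (Suc j))) =
    (\<Sum>q | q permutes {1..m}. of_int (sign q) * (\<Prod>a\<in>{1..m}. f a (q a)))"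
proof -
  have bij: "bij_betw Suc {0..<m} {1..m}"
    by (rule bij_betwI[where g = "\<lambda>x. x - 1"]) auto
  have "det (mat m m (\<lambda>(i, j). f (Suc i) (Suc j))) =
      (\<Sum>p | p permutes {0..<m}. of_int (sign p) * (\<Prod>i\<in>{0..<m}. f (Suc i) (Suc (p i))))"
    by (subst det_def'[of _ m]) (auto intro!: sum.cong prod.cong simp: permutes_in_image)
  also have "\<dots> = (\<Sum>p | p permutes {0..<m}. of_int (sign (map_permutation {0..<m} Suc p)) *
      (\<Prod>a\<in>{1..m}. f a (map_permutation {0..<m} Suc p a)))"
  proof (intro sum.cong refl arg_cong2[where f = "(*)"])
    fix p assume "p \<in> {p. p permutes {0..<m}}"
    then have p: "p permutes {0..<m}" by simp
    show "of_int (sign p) = of_int (sign (map_permutation {0..<m} Suc p))"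
      using sign_map_permutation[of Suc "{0..<m}" p] p by simp
    have "(\<Prod>a\<in>{1..m}. f a (map_permutation {0..<m} Suc p a)) =
        (\<Prod>i\<in>{0..<m}. f (Suc i) (map_permutation {0..<m} Suc p (Suc i)))"
      using prod.reindex_bij_betw[OF bij, of "\<lambda>a. f a (map_permutation {0..<m} Suc p a)"] by simp
    then show "(\<Prod>i\<in>{0..<m}. f (Suc i) (Suc (p i))) =
        (\<Prod>a\<in>{1..m}. f a (map_permutation {0..<m} Suc p a))"
      by (simp add: map_permutation_apply)
  qed
  also have "\<dots> = (\<Sum>q | q permutes {1..m}. of_int (sign q) * (\<Prod>a\<in>{1..m}. f a (q a)))"
    by (rule sum_permutations_map_permutation[OF bij, symmetric])
  finally show ?thesis .
qed

lemma prod_mult_det_reciprocal_mat: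
  fixes D :: "nat \<Rightarrow> nat \<Rightarrow> 'a::field"
  assumes "\<And>a b. a \<in> {1..m} \<Longrightarrow> b \<in> {1..m} \<Longrightarrow> D a b \<noteq> 0"
  shows "(\<Prod>a\<in>{1..m}. \<Prod>b\<in>{1..m}. D a b) * det (mat m m (\<lambda>(i, j). c / D (Suc i) (Suc j))) =
    c ^ m * (\<Sum>q | q permutes {1..m}. of_int (sign q) * (\<Prod>a\<in>{1..m}. \<Prod>b\<in>{1..m}-{q a}. D a b))"
  unfolding det_mat_Suc_indexed[where f = "\<lambda>a b. c / D a b"] sum_distrib_left
proof (intro sum.cong refl)
  fix q assume "q \<in> {q. q permutes {1..m}}"
  then have q: "q permutes {1..m}" by simp
  have row: "(\<Prod>b\<in>{1..m}. D a b) * (c / D a (q a)) = c * (\<Prod>b\<in>{1..m}-{q a}. D a b)"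
    if a: "a \<in> {1..m}" for a
  proof -
    have qa: "q a \<in> {1..m}"
      using permutes_in_image[OF q] a by simp
    then have "(\<Prod>b\<in>{1..m}. D a b) = D a (q a) * (\<Prod>b\<in>{1..m}-{q a}. D a b)"
      by (intro prod.remove) auto
    then show ?thesis
      using assms[OF a qa] by simp
  qed
  have "(\<Prod>a\<in>{1..m}. \<Prod>b\<in>{1..m}. D a b) * (\<Prod>a\<in>{1..m}. c / D a (q a)) =
      (\<Prod>a\<in>{1..m}. c * (\<Prod>b\<in>{1..m}-{q a}. D a b))"
    unfolding prod.distrib[symmetric] by (intro prod.cong refl row)
  then show "(\<Prod>a\<in>{1..m}. \<Prod>b\<in>{1..m}. D a b) * (of_int (sign q) * (\<Prod>a\<in>{1..m}. c / D a (q a))) =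
      c ^ m * (of_int (sign q) * (\<Prod>a\<in>{1..m}. \<Prod>b\<in>{1..m}-{q a}. D a b))"
    by (simp add: prod.distrib mult_ac)
qed

(* As eps s a is -1/2 or 1/2, shift_plus and shift_minus are lam a + i zeta/2 and
   lam a - i zeta/2 in some order. *)
definition shift_plus :: "real \<Rightarrow> nat \<Rightarrow> (nat \<Rightarrow> complex) \<Rightarrow> nat \<Rightarrow> complex"
  where "shift_plus \<zeta> s lam a = lam a + \<i> * eps s a * of_real \<zeta>"

definition shift_minus :: "real \<Rightarrow> nat \<Rightarrow> (nat \<Rightarrow> complex) \<Rightarrow> nat \<Rightarrow> complex"
  where "shift_minus \<zeta> s lam a = lam a - \<i> * eps s a * of_real \<zeta>"

lemma shift_differences:
  "shift_plus \<zeta> s lam a - shift_minus \<zeta> s lam b \<in>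
     {lam a - lam b, lam a - lam b + \<i> * of_real \<zeta>, lam a - lam b - \<i> * of_real \<zeta>}"
  "shift_minus \<zeta> s lam a - shift_minus \<zeta> s lam b \<in>
     {lam a - lam b, lam a - lam b + \<i> * of_real \<zeta>, lam a - lam b - \<i> * of_real \<zeta>}"
  unfolding shift_plus_def shift_minus_def eps_def
  by (cases "a \<le> s"; cases "b \<le> s"; simp add: algebra_simps)+

lemma sinh_shift_product:
  "sinh (lam a - x + \<i> * of_real \<zeta> / 2) * sinh (lam a - x - \<i> * of_real \<zeta> / 2) =
   sinh (shift_plus \<zeta> s lam a - x) * sinh (shift_minus \<zeta> s lam a - x)"
  unfolding shift_plus_def shift_minus_def eps_def
  by (cases "a \<le> s") (simp_all add: algebra_simps)

lemma G_eq_Gsum: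
  "of_nat (fact s * fact (m - s)) * G \<zeta> s m lam xi =
   Gsum (\<lambda>u v. sinh (u - v)) m (shift_plus \<zeta> s lam) (shift_minus \<zeta> s lam) xi"
proof -
  have "lam a - x + \<i> * eps s a * of_real \<zeta> = shift_plus \<zeta> s lam a - x"
    and "lam a - x - \<i> * eps s a * of_real \<zeta> = shift_minus \<zeta> s lam a - x"
    and "lam a - lam b + \<i> * (eps s a + eps s b) * of_real \<zeta> = shift_plus \<zeta> s lam a - shift_minus \<zeta> s lam b"
    for a b x
    by (simp_all add: shift_plus_def shift_minus_def algebra_simps)
  then have "G \<zeta> s m lam xi = 1 / of_nat (fact s * fact (m - s)) *
      Gsum (\<lambda>u v. sinh (u - v)) m (shift_plus \<zeta> s lam) (shift_minus \<zeta> s lam) xi"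
    unfolding G_def Gsum_def index_pairs_def by (simp only:)
  then show ?thesis
    by simp
qed

lemma Pfac_eq_Theta:
  assumes "s \<le> m"
  shows "Pfac \<zeta> s m lam = Theta \<zeta> s m lam"
proof -
  define f where "f = (\<lambda>(k, j). sinh (lam j - lam k) /
      (sinh (lam j - lam k + \<i> * (eps s j + eps s k) * of_real \<zeta>) *
       sinh (lam j - lam k - \<i> * (eps s j + eps s k) * of_real \<zeta>)))"
  define g where "g = (\<lambda>(k, j). sinh (lam j - lam k) /
      (sinh (lam j - lam k + \<i> * of_real \<zeta>) * sinh (lam j - lam k - \<i> * of_real \<zeta>)))"
  define A1 where "A1 = {(k, j). 1 \<le> k \<and> k < j \<and> j \<le> s}"
  define A2 where "A2 = {(k, j). s < k \<and> k < j \<and> j \<le> m}"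
  define A3 where "A3 = {1..s} \<times> {s+1..m}"
  have fin: "finite A1" "finite A2" "finite A3"
    using finite_index_pairs[of m] assms
    by (auto simp: A1_def A2_def A3_def index_pairs_def elim!: rev_finite_subset)
  have pairs: "index_pairs m = A3 \<union> (A2 \<union> A1)"
    using assms by (auto simp: index_pairs_def A1_def A2_def A3_def)
  have "Pfac \<zeta> s m lam = prod f (index_pairs m)"
    unfolding Pfac_def f_def index_pairs_def ..
  also have "\<dots> = prod f A3 * (prod f A2 * prod f A1)"
    unfolding pairs using fin
    by (subst prod.union_disjoint, simp_all, force simp: A1_def A2_def A3_def,
        subst prod.union_disjoint, simp_all, force simp: A1_def A2_def A3_def)
  also have "prod f A1 = prod g A1"
    by (intro prod.cong refl) (auto simp: A1_def f_def g_def eps_def algebra_simps)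
  also have "prod f A2 = prod g A2"
    by (intro prod.cong refl) (auto simp: A2_def f_def g_def eps_def algebra_simps)
  also have "prod f A3 = (\<Prod>k\<in>{1..s}. \<Prod>j\<in>{s+1..m}. 1 / sinh (lam j - lam k))"
    unfolding A3_def prod.cartesian_product
    by (intro prod.cong refl) (auto simp: f_def eps_def)
  finally show ?thesis
    unfolding Theta_def g_def A1_def A2_def by (simp add: mult_ac)
qed

lemma cross_vandermonde_Pfac:
  assumes "\<And>a b. a \<in> {1..m} \<Longrightarrow> b \<in> {1..m} \<Longrightarrow> a \<noteq> b \<Longrightarrow>
      sinh (shift_plus \<zeta> s lam a - shift_minus \<zeta> s lam b) \<noteq> 0"
  shows "cross_prod (\<lambda>u v. sinh (u - v)) m (shift_plus \<zeta> s lam) (shift_minus \<zeta> s lam) *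
      vandermonde (\<lambda>u v. sinh (u - v)) m xi * Pfac \<zeta> s m lam =
    (\<Prod>(k, j)\<in>index_pairs m. sinh (lam j - lam k) * sinh (xi k - xi j))"
proof -
  let ?U = "shift_plus \<zeta> s lam" and ?W = "shift_minus \<zeta> s lam"
  have "lam j - lam k + \<i> * (eps s j + eps s k) * of_real \<zeta> = ?U j - ?W k"
    and "lam j - lam k - \<i> * (eps s j + eps s k) * of_real \<zeta> = ?W j - ?U k" for j k
    by (simp_all add: shift_plus_def shift_minus_def algebra_simps)
  then have Pfac: "Pfac \<zeta> s m lam =
      (\<Prod>(k, j)\<in>index_pairs m. sinh (lam j - lam k) / (sinh (?U j - ?W k) * sinh (?W j - ?U k)))"
    unfolding Pfac_def index_pairs_def by simp
  have cross: "cross_prod (\<lambda>u v. sinh (u - v)) m ?U ?W =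
      (\<Prod>(k, j)\<in>index_pairs m. sinh (?U j - ?W k) * sinh (?U k - ?W j))"
    unfolding cross_prod_def by (rule prod_offdiag_eq_prod_index_pairs)
  have pair: "sinh (?U j - ?W k) * sinh (?U k - ?W j) * sinh (xi j - xi k) *
      (sinh (lam j - lam k) / (sinh (?U j - ?W k) * sinh (?W j - ?U k))) =
      sinh (lam j - lam k) * sinh (xi k - xi j)" if "(k, j) \<in> index_pairs m" for k j
  proof -
    from that have k: "k \<in> {1..m}" and j: "j \<in> {1..m}" and "j \<noteq> k"
      by (auto simp: index_pairs_def)
    have flip: "sinh (?U k - ?W j) = - sinh (?W j - ?U k)" "sinh (xi j - xi k) = - sinh (xi k - xi j)"
      using sinh_minus[of "?W j - ?U k"] sinh_minus[of "xi k - xi j"] by (simp_all add: algebra_simps)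
    have "sinh (?U j - ?W k) \<noteq> 0" "sinh (?W j - ?U k) \<noteq> 0"
      using assms[OF j k] assms[OF k j] \<open>j \<noteq> k\<close> flip(1) by auto
    then show ?thesis
      unfolding flip by (simp add: field_simps)
  qed
  show ?thesis
    unfolding cross vandermonde_def Pfac prod.distrib[symmetric]
    by (intro prod.cong refl) (clarify, rule pair)
qed

lemma Z_eq_Zsum:
  assumes "\<And>a b. a \<in> {1..m} \<Longrightarrow> b \<in> {1..m} \<Longrightarrow>
      sinh (lam a - xi b + \<i> * of_real \<zeta> / 2) \<noteq> 0 \<and> sinh (lam a - xi b - \<i> * of_real \<zeta> / 2) \<noteq> 0"
  shows "Z \<zeta> m lam xi = of_real (sin \<zeta>) ^ m *
      Zsum (\<lambda>u v. sinh (u - v)) m (shift_plus \<zeta> s lam) (shift_minus \<zeta> s lam) xi /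
      (\<Prod>(k, j)\<in>index_pairs m. sinh (lam j - lam k) * sinh (xi k - xi j))"
proof -
  define D where "D a b = sinh (lam a - xi b + \<i> * of_real \<zeta> / 2) * sinh (lam a - xi b - \<i> * of_real \<zeta> / 2)"
    for a b
  have "Mmat \<zeta> m lam xi = mat m m (\<lambda>(i, j). of_real (sin \<zeta>) / D (Suc i) (Suc j))"
    unfolding Mmat_def D_def ..
  then have "(\<Prod>a\<in>{1..m}. \<Prod>b\<in>{1..m}. D a b) * det (Mmat \<zeta> m lam xi) = of_real (sin \<zeta>) ^ m *
      (\<Sum>q | q permutes {1..m}. of_int (sign q) * (\<Prod>a\<in>{1..m}. \<Prod>b\<in>{1..m}-{q a}. D a b))"
    using prod_mult_det_reciprocal_mat[of m D] assms by (simp add: D_def)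
  also have "(\<Sum>q | q permutes {1..m}. of_int (sign q) * (\<Prod>a\<in>{1..m}. \<Prod>b\<in>{1..m}-{q a}. D a b)) =
      Zsum (\<lambda>u v. sinh (u - v)) m (shift_plus \<zeta> s lam) (shift_minus \<zeta> s lam) xi"
    unfolding Zsum_eq_sum_inverse D_def sinh_shift_product[where s = s] ..
  finally have "(\<Prod>a\<in>{1..m}. \<Prod>b\<in>{1..m}. D a b) * det (Mmat \<zeta> m lam xi) =
      of_real (sin \<zeta>) ^ m * Zsum (\<lambda>u v. sinh (u - v)) m (shift_plus \<zeta> s lam) (shift_minus \<zeta> s lam) xi" .
  moreover have "Z \<zeta> m lam xi = (\<Prod>a\<in>{1..m}. \<Prod>b\<in>{1..m}. D a b) /
      (\<Prod>(k, j)\<in>index_pairs m. sinh (lam j - lam k) * sinh (xi k - xi j)) * det (Mmat \<zeta> m lam xi)"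
    unfolding Z_def D_def index_pairs_def ..
  ultimately show ?thesis
    by simp
qed

context
  fixes \<zeta> :: real and m s :: nat and lam xi :: "nat \<Rightarrow> complex"
  assumes generic_ll: "\<And>a b. a \<in> {1..m} \<Longrightarrow> b \<in> {1..m} \<Longrightarrow> a \<noteq> b \<Longrightarrow>
            sinh (lam a - lam b) \<noteq> 0 \<and> sinh (lam a - lam b + \<i> * of_real \<zeta>) \<noteq> 0
            \<and> sinh (lam a - lam b - \<i> * of_real \<zeta>) \<noteq> 0"
    and generic_xx: "\<And>a b. a \<in> {1..m} \<Longrightarrow> b \<in> {1..m} \<Longrightarrow> a \<noteq> b \<Longrightarrow> sinh (xi a - xi b) \<noteq> 0"
    and generic_lx: "\<And>a b. a \<in> {1..m} \<Longrightarrow> b \<in> {1..m} \<Longrightarrow>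
            sinh (lam a - xi b + \<i> * of_real \<zeta> / 2) \<noteq> 0 \<and> sinh (lam a - xi b - \<i> * of_real \<zeta> / 2) \<noteq> 0"
begin

lemma sinh_shift_diff_ne_0:
  assumes "a \<in> {1..m}" "b \<in> {1..m}"
  shows "a \<noteq> b \<Longrightarrow> sinh (shift_plus \<zeta> s lam a - shift_minus \<zeta> s lam b) \<noteq> 0"
    and "a \<noteq> b \<Longrightarrow> sinh (shift_minus \<zeta> s lam a - shift_minus \<zeta> s lam b) \<noteq> 0"
    and "sinh (shift_minus \<zeta> s lam a - xi b) \<noteq> 0"
  using generic_ll[OF assms] shift_differences[of \<zeta> s lam a b] generic_lx[OF assms]
    sinh_shift_product[of lam a "xi b" \<zeta> s]
  by auto

lemma prod_index_pairs_sinh_ne_0: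
  "(\<Prod>(k, j)\<in>index_pairs m. sinh (lam j - lam k) * sinh (xi k - xi j)) \<noteq> 0"
  unfolding prod_zero_iff[OF finite_index_pairs]
  using generic_ll generic_xx by (auto simp: index_pairs_def)

lemma cross_vandermonde_Pfac_shift:
  "cross_prod (\<lambda>u v. sinh (u - v)) m (shift_plus \<zeta> s lam) (shift_minus \<zeta> s lam) *
      vandermonde (\<lambda>u v. sinh (u - v)) m xi * Pfac \<zeta> s m lam =
    (\<Prod>(k, j)\<in>index_pairs m. sinh (lam j - lam k) * sinh (xi k - xi j))"
  by (rule cross_vandermonde_Pfac) (use sinh_shift_diff_ne_0 in auto)

lemma Pfac_ne_0: "Pfac \<zeta> s m lam \<noteq> 0"
  using cross_vandermonde_Pfac_shift prod_index_pairs_sinh_ne_0 by auto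

lemma Gsum_div_Pfac:
  "Gsum (\<lambda>u v. sinh (u - v)) m (shift_plus \<zeta> s lam) (shift_minus \<zeta> s lam) xi / Pfac \<zeta> s m lam =
   Zsum (\<lambda>u v. sinh (u - v)) m (shift_plus \<zeta> s lam) (shift_minus \<zeta> s lam) xi /
   (\<Prod>(k, j)\<in>index_pairs m. sinh (lam j - lam k) * sinh (xi k - xi j))"
proof -
  let ?sh = "\<lambda>u v. sinh (u - v)" and ?U = "shift_plus \<zeta> s lam" and ?W = "shift_minus \<zeta> s lam"
  let ?CV = "cross_prod ?sh m ?U ?W * vandermonde ?sh m xi"
  have identity: "Gsum ?sh m ?U ?W xi * ?CV = Zsum ?sh m ?U ?W xi"
    using Gsum_cross_vandermonde_sinh[of m ?U ?W xi] sinh_shift_diff_ne_0 generic_xx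
    by (simp add: mult.assoc)
  have "?CV \<noteq> 0"
    using cross_vandermonde_Pfac_shift prod_index_pairs_sinh_ne_0 by auto
  then have "Gsum ?sh m ?U ?W xi / Pfac \<zeta> s m lam = (Gsum ?sh m ?U ?W xi * ?CV) / (?CV * Pfac \<zeta> s m lam)"
    by simp
  then show ?thesis
    unfolding identity cross_vandermonde_Pfac_shift .
qed

end

theorem mainTheorem4:
  fixes \<zeta> :: real and m s :: nat and lam xi :: "nat \<Rightarrow> complex"
  assumes "0 < \<zeta>" and "\<zeta> < pi"
    and "1 \<le> m" and "s \<le> m"
    and generic_ll: "\<And>a b. a \<in> {1..m} \<Longrightarrow> b \<in> {1..m} \<Longrightarrow> a \<noteq> b \<Longrightarrow>
            sinh (lam a - lam b) \<noteq> 0 \<and> sinh (lam a - lam b + \<i> * of_real \<zeta>) \<noteq> 0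
            \<and> sinh (lam a - lam b - \<i> * of_real \<zeta>) \<noteq> 0"
    and generic_xx: "\<And>a b. a \<in> {1..m} \<Longrightarrow> b \<in> {1..m} \<Longrightarrow> a \<noteq> b \<Longrightarrow> sinh (xi a - xi b) \<noteq> 0"
    and generic_lx: "\<And>a b. a \<in> {1..m} \<Longrightarrow> b \<in> {1..m} \<Longrightarrow>
            sinh (lam a - xi b + \<i> * of_real \<zeta> / 2) \<noteq> 0 \<and> sinh (lam a - xi b - \<i> * of_real \<zeta> / 2) \<noteq> 0"
  shows "Gtilde \<zeta> s m lam xi = Z \<zeta> m lam xi / (of_real (sin \<zeta>)) ^ m
       \<and> G \<zeta> s m lam xi = Theta \<zeta> s m lam * Z \<zeta> m lam xi /
            (of_nat (fact s * fact (m - s)) * (of_real (sin \<zeta>)) ^ m)"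
proof -
  have sin_pow: "of_real (sin \<zeta>) ^ m \<noteq> (0::complex)"
    using sin_gt_zero[OF assms(1,2)] by simp
  have cancel: "a / q = c * a / q / c" if "c \<noteq> (0::complex)" for a q c
    using that by simp
  have "Gtilde \<zeta> s m lam xi =
      Gsum (\<lambda>u v. sinh (u - v)) m (shift_plus \<zeta> s lam) (shift_minus \<zeta> s lam) xi / Pfac \<zeta> s m lam"
    unfolding Gtilde_def G_eq_Gsum ..
  also have "\<dots> = Zsum (\<lambda>u v. sinh (u - v)) m (shift_plus \<zeta> s lam) (shift_minus \<zeta> s lam) xi /
      (\<Prod>(k, j)\<in>index_pairs m. sinh (lam j - lam k) * sinh (xi k - xi j))"
    by (rule Gsum_div_Pfac) fact+
  also have "\<dots> = Z \<zeta> m lam xi / of_real (sin \<zeta>) ^ m"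
    by (subst Z_eq_Zsum[where s = s]) (fact | rule cancel[OF sin_pow])+
  finally have Gtilde: "Gtilde \<zeta> s m lam xi = Z \<zeta> m lam xi / of_real (sin \<zeta>) ^ m" .
  have "Pfac \<zeta> s m lam \<noteq> 0"
    by (rule Pfac_ne_0) fact+
  with Gtilde sin_pow have "G \<zeta> s m lam xi = Theta \<zeta> s m lam * Z \<zeta> m lam xi /
      (of_nat (fact s * fact (m - s)) * of_real (sin \<zeta>) ^ m)"
    unfolding Gtilde_def Pfac_eq_Theta[OF \<open>s \<le> m\<close>] by (simp add: field_simps)
  with Gtilde show ?thesis ..
qed

end
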